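(* Let $G\subseteq O(d)$ be a subgroup and let $\mathcal{F}$ be a fan in $\mathbb{R}^d$ that is $G$-invariant, i.e. $\mathcal{F}=\{gC:C\in\mathcal{F}\}$ for all $g\in G$. If $\mathcal{F}$ is inscribable, then there is an inscribed polytope $P$ with normal fan $\mathcal{F}$ such that $gP=P$ for all $g\in G$.
   Context: A fan $\mathcal{F}$ is inscribable if there is a polytope whose vertices lie on a common sphere and whose normal fan equals $\mathcal{F}$. *)

theory Defs
  imports "HOL-Analysis.Analysis"
begin

definition polyhedral_cone :: "'a::euclidean_space set \<Rightarrow> bool" where
  "polyhedral_cone C \<longleftrightarrow> cone C \<and> polyhedron C"

definition is_fan :: "'a::euclidean_space set set \<Rightarrow> bool" where
  "is_fan \<F> \<longleftrightarrow> finite \<F> \<and>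
     (\<forall>C\<in>\<F>. polyhedral_cone C) \<and>
     (\<forall>C\<in>\<F>. \<forall>F. F face_of C \<and> F \<noteq> {} \<longrightarrow> F \<in> \<F>) \<and>
     (\<forall>C\<in>\<F>. \<forall>D\<in>\<F>. (C \<inter> D) face_of C \<and> (C \<inter> D) face_of D)"

definition normal_cone :: "'a::euclidean_space set \<Rightarrow> 'a set \<Rightarrow> 'a set" where
  "normal_cone P F = {c. \<forall>x\<in>F. \<forall>y\<in>P. c \<bullet> y \<le> c \<bullet> x}"

definition normal_fan :: "'a::euclidean_space set \<Rightarrow> 'a set set" where
  "normal_fan P = {normal_cone P F | F. F face_of P \<and> F \<noteq> {}}"

definition inscribed :: "'a::euclidean_space set \<Rightarrow> bool" where
  "inscribed P \<longleftrightarrow> polytope P \<and>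
     (\<exists>z r. \<forall>v. v extreme_point_of P \<longrightarrow> v \<in> sphere z r)"

definition inscribable :: "'a::euclidean_space set set \<Rightarrow> bool" where
  "inscribable \<F> \<longleftrightarrow> (\<exists>P. inscribed P \<and> normal_fan P = \<F>)"

definition orthogonal_subgroup :: "('a::euclidean_space \<Rightarrow> 'a) set \<Rightarrow> bool" where
  "orthogonal_subgroup G \<longleftrightarrow>
     (\<forall>g\<in>G. orthogonal_transformation g) \<and> id \<in> G \<and>
     (\<forall>g\<in>G. \<forall>h\<in>G. g \<circ> h \<in> G) \<and> (\<forall>g\<in>G. inv g \<in> G)"

end

theory Submission
  imports Defs
begin

text \<open>Translate an inscribed realization of the fan so that the centre of its circumsphere is the
  origin and lies in the affine hull of the vertex set V. For g \<in> G the set g ` V is the vertex set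
  of another such realization, and any two of them are matched vertex by vertex by a map respecting
  all faces. Along an edge both realizations move parallel to the edge, and this forces the inner
  product of corresponding vertices to be the same at both ends; by induction over faces it is
  constant on V. Consequently the Minkowski sum of the realizations g ` V is again inscribed, with
  the same normal fan. Only finitely many sets g ` V occur, because an orthogonal map fixing every
  cone of the fan fixes V pointwise, so summing over the orbit gives a G-invariant inscribed
  realization.\<close>

section \<open>Faces of finite point sets\<close>

definition maximizers :: "'a::euclidean_space set \<Rightarrow> 'a \<Rightarrow> 'a set" where
  "maximizers V c = {v\<in>V. \<forall>u\<in>V. c \<bullet> u \<le> c \<bullet> v}"

text \<open>If face_preserving V f, then conv (f ` V) is normally equivalent to conv V, with f as the
  vertex correspondence.\<close>

definition face_preserving :: "'a::euclidean_space set \<Rightarrow> ('a \<Rightarrow> 'a) \<Rightarrow> bool" where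
  "face_preserving V f \<longleftrightarrow> inj_on f V \<and> (\<forall>c. maximizers (f ` V) c = f ` maximizers V c)"

definition face_normal_cone :: "'a::euclidean_space set \<Rightarrow> 'a \<Rightarrow> 'a set" where
  "face_normal_cone V c = {c'. maximizers V c \<subseteq> maximizers V c'}"

lemma maximizers_subset: "maximizers V c \<subseteq> V"
  by (auto simp: maximizers_def)

lemma maximizers_nonempty:
  assumes "finite V" "V \<noteq> {}"
  shows "maximizers V c \<noteq> {}"
proof -
  have "Max ((\<lambda>u. c \<bullet> u) ` V) \<in> (\<lambda>u. c \<bullet> u) ` V"
    using assms by simp
  then obtain v where "v \<in> V" "c \<bullet> v = Max ((\<lambda>u. c \<bullet> u) ` V)"
    by auto
  then show ?thesis
    using assms by (auto simp: maximizers_def)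
qed

lemma maximizers_zero: "maximizers V 0 = V"
  by (auto simp: maximizers_def)

lemma maximizers_inner_eq:
  "x \<in> maximizers V c \<Longrightarrow> y \<in> maximizers V c \<Longrightarrow> c \<bullet> x = c \<bullet> y"
  by (auto simp: maximizers_def intro: order.antisym)

lemma maximizers_cong:
  assumes "\<And>x y. x \<in> V \<Longrightarrow> y \<in> V \<Longrightarrow> c \<bullet> x - c \<bullet> y = c' \<bullet> x - c' \<bullet> y"
  shows "maximizers V c = maximizers V c'"
proof -
  have "c \<bullet> x \<le> c \<bullet> y \<longleftrightarrow> c' \<bullet> x \<le> c' \<bullet> y" if "x \<in> V" "y \<in> V" for x y
    using assms[OF that] by linarith
  then show ?thesis
    unfolding maximizers_def by blast
qed

lemma inner_less_on_sphere:
  fixes u v :: "'a::euclidean_space"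
  assumes "u \<in> sphere 0 r" "v \<in> sphere 0 r" "u \<noteq> v"
  shows "v \<bullet> u < v \<bullet> v"
proof -
  have "u \<bullet> u = r\<^sup>2" "v \<bullet> v = r\<^sup>2"
    using assms by (auto simp: dot_square_norm)
  moreover have "0 < (v - u) \<bullet> (v - u)"
    using assms(3) by simp
  ultimately show ?thesis
    by (simp add: inner_diff_left inner_diff_right inner_commute)
qed

lemma maximizers_sphere_self:
  assumes "V \<subseteq> sphere 0 r" "v \<in> V"
  shows "maximizers V v = {v}"
  using assms inner_less_on_sphere[of _ r v] by (fastforce simp: maximizers_def subset_iff)

lemma maximizers_maximizers_iff:
  "v \<in> maximizers (maximizers V c) c' \<longleftrightarrow>
     v \<in> V \<and> (\<forall>u\<in>V. c \<bullet> u < c \<bullet> v \<or> (c \<bullet> u = c \<bullet> v \<and> c' \<bullet> u \<le> c' \<bullet> v))"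
proof
  assume "v \<in> maximizers (maximizers V c) c'"
  then show "v \<in> V \<and> (\<forall>u\<in>V. c \<bullet> u < c \<bullet> v \<or> (c \<bullet> u = c \<bullet> v \<and> c' \<bullet> u \<le> c' \<bullet> v))"
    unfolding maximizers_def by (force simp: order.order_iff_strict)
next
  assume "v \<in> V \<and> (\<forall>u\<in>V. c \<bullet> u < c \<bullet> v \<or> (c \<bullet> u = c \<bullet> v \<and> c' \<bullet> u \<le> c' \<bullet> v))"
  then show "v \<in> maximizers (maximizers V c) c'"
    unfolding maximizers_def by force
qed

lemma eventually_at_right_0_nonneg_iff:
  fixes D E :: real
  shows "eventually (\<lambda>t. 0 \<le> D + t * E \<longleftrightarrow> 0 < D \<or> (D = 0 \<and> 0 \<le> E)) (at_right 0)"
proof (cases "D = 0")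
  case True
  then have "0 \<le> D + t * E \<longleftrightarrow> 0 < D \<or> (D = 0 \<and> 0 \<le> E)" if "0 < t" for t
    using that by (simp add: zero_le_mult_iff)
  then show ?thesis
    unfolding eventually_at_right_field by (intro exI[of _ 1]) simp
next
  case False
  have lim: "((\<lambda>t. D + t * E) \<longlongrightarrow> D) (at_right 0)"
    by (auto intro!: tendsto_eq_intros)
  show ?thesis
  proof (cases "D > 0")
    case True
    with lim have "eventually (\<lambda>t. 0 < D + t * E) (at_right 0)"
      by (rule order_tendstoD)
    then show ?thesis
      by eventually_elim (use True in auto)
  next
    case False
    with \<open>D \<noteq> 0\<close> lim have "eventually (\<lambda>t. D + t * E < 0) (at_right 0)"
      by (intro order_tendstoD) auto
    then show ?thesis
      by eventually_elim (use False \<open>D \<noteq> 0\<close> in auto)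
  qed
qed

lemma eventually_maximizers_perturb:
  assumes "finite V"
  shows "eventually (\<lambda>t. maximizers V (c + t *\<^sub>R c') = maximizers (maximizers V c) c') (at_right 0)"
proof -
  have "eventually (\<lambda>t. \<forall>u\<in>V. \<forall>v\<in>V.
      0 \<le> (c \<bullet> v - c \<bullet> u) + t * (c' \<bullet> v - c' \<bullet> u) \<longleftrightarrow>
      0 < c \<bullet> v - c \<bullet> u \<or> (c \<bullet> v - c \<bullet> u = 0 \<and> 0 \<le> c' \<bullet> v - c' \<bullet> u)) (at_right 0)"
    using assms by (intro eventually_ball_finite ballI eventually_at_right_0_nonneg_iff)
  then show ?thesis
  proof eventually_elim
    case (elim t)
    then have "(c + t *\<^sub>R c') \<bullet> u \<le> (c + t *\<^sub>R c') \<bullet> v \<longleftrightarrow>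
        c \<bullet> u < c \<bullet> v \<or> (c \<bullet> u = c \<bullet> v \<and> c' \<bullet> u \<le> c' \<bullet> v)" if "u \<in> V" "v \<in> V" for u v
      using that by (auto simp: inner_add_left algebra_simps)
    then show ?case
      unfolding set_eq_iff maximizers_maximizers_iff by (auto simp: maximizers_def)
  qed
qed

lemma eventually_maximizers_subset_nhds:
  assumes "finite V"
  shows "eventually (\<lambda>c'. maximizers V c' \<subseteq> maximizers V c) (nhds c)"
proof -
  have "eventually (\<lambda>c'. \<forall>v\<in>V - maximizers V c. v \<notin> maximizers V c') (nhds c)"
  proof (intro eventually_ball_finite ballI)
    show "finite (V - maximizers V c)"
      using assms by simp
    fix v assume "v \<in> V - maximizers V c"
    then obtain u where u: "u \<in> V" "c \<bullet> u > c \<bullet> v"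
      by (auto simp: maximizers_def not_le)
    have "((\<lambda>x. x \<bullet> u - x \<bullet> v) \<longlongrightarrow> c \<bullet> u - c \<bullet> v) (nhds c)"
      by (intro tendsto_intros) (simp_all add: filterlim_ident)
    then have "eventually (\<lambda>x. x \<bullet> u - x \<bullet> v > 0) (nhds c)"
      using u by (intro order_tendstoD) auto
    then show "eventually (\<lambda>c'. v \<notin> maximizers V c') (nhds c)"
      by eventually_elim (use u in \<open>force simp: maximizers_def\<close>)
  qed
  then show ?thesis
    by eventually_elim (auto simp: maximizers_def)
qed

lemma face_preserving_iff_mem_maximizers:
  "face_preserving V f \<longleftrightarrow>
     inj_on f V \<and> (\<forall>v\<in>V. \<forall>c. f v \<in> maximizers (f ` V) c \<longleftrightarrow> v \<in> maximizers V c)"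
proof
  assume "face_preserving V f"
  then show "inj_on f V \<and> (\<forall>v\<in>V. \<forall>c. f v \<in> maximizers (f ` V) c \<longleftrightarrow> v \<in> maximizers V c)"
    unfolding face_preserving_def by (metis inj_on_image_mem_iff maximizers_subset)
next
  assume *: "inj_on f V \<and> (\<forall>v\<in>V. \<forall>c. f v \<in> maximizers (f ` V) c \<longleftrightarrow> v \<in> maximizers V c)"
  have "maximizers (f ` V) c = f ` maximizers V c" for c
  proof
    show "maximizers (f ` V) c \<subseteq> f ` maximizers V c"
      using * maximizers_subset[of "f ` V" c] by blast
    show "f ` maximizers V c \<subseteq> maximizers (f ` V) c"
      using * maximizers_subset[of V c] by blast
  qed
  with * show "face_preserving V f"
    by (simp add: face_preserving_def)
qed

lemma face_preserving_maximizers: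
  assumes "finite V" "face_preserving V f"
  shows "face_preserving (maximizers V c) f"
  unfolding face_preserving_def
proof
  show "inj_on f (maximizers V c)"
    using assms(2) maximizers_subset by (auto simp: face_preserving_def intro: inj_on_subset)
  show "\<forall>c'. maximizers (f ` maximizers V c) c' = f ` maximizers (maximizers V c) c'"
  proof
    fix c'
    obtain t where t: "maximizers V (c + t *\<^sub>R c') = maximizers (maximizers V c) c'"
        "maximizers (f ` V) (c + t *\<^sub>R c') = maximizers (maximizers (f ` V) c) c'"
      using eventually_happens'[OF trivial_limit_at_right_real
          eventually_conj[OF eventually_maximizers_perturb eventually_maximizers_perturb]] assms(1)
      by blast
    have "maximizers (f ` maximizers V c) c' = maximizers (maximizers (f ` V) c) c'"
      using assms(2) by (simp add: face_preserving_def)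
    also have "\<dots> = f ` maximizers V (c + t *\<^sub>R c')"
      using assms(2) t(2) by (simp add: face_preserving_def)
    also have "\<dots> = f ` maximizers (maximizers V c) c'"
      using t(1) by simp
    finally show "maximizers (f ` maximizers V c) c' = f ` maximizers (maximizers V c) c'" .
  qed
qed

section \<open>Edges and induction over faces of points on a sphere\<close>

lemma eq_projection_if_orthogonal_complement:
  fixes d e :: "'a::real_inner"
  assumes "\<And>c. c \<bullet> e = 0 \<Longrightarrow> c \<bullet> d = 0"
  shows "d = ((d \<bullet> e) / (e \<bullet> e)) *\<^sub>R e"
proof -
  define c0 where "c0 = d - ((d \<bullet> e) / (e \<bullet> e)) *\<^sub>R e"
  have "c0 \<bullet> e = 0"
    using assms[of e] by (cases "e = 0") (simp_all add: c0_def inner_diff_left)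
  moreover from this have "c0 \<bullet> d = 0"
    by (rule assms)
  ultimately have "c0 \<bullet> c0 = 0"
    by (simp add: c0_def inner_diff_left inner_diff_right inner_commute)
  then show ?thesis
    by (simp add: c0_def)
qed

text \<open>Directions orthogonal to a - b do not separate a and b, so they cannot separate f a and f b
  either: f a - f b is parallel to a - b, and the direction a - b fixes the sign.\<close>

lemma face_preserving_edge:
  assumes "a \<noteq> b" "face_preserving {a, b} f"
  shows "\<exists>l>0. f a - f b = l *\<^sub>R (a - b)"
proof -
  define e where "e = a - b"
  define d where "d = f a - f b"
  define m where "m = (d \<bullet> e) / (e \<bullet> e)"
  have "c \<bullet> d = 0" if "c \<bullet> e = 0" for c
  proof -
    have "c \<bullet> a = c \<bullet> b"
      using that by (simp add: e_def inner_diff_right)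
    then have "maximizers {a, b} c = {a, b}"
      by (auto simp: maximizers_def)
    then have "maximizers {f a, f b} c = {f a, f b}"
      using assms(2) by (simp add: face_preserving_def)
    then have "c \<bullet> f b \<le> c \<bullet> f a" "c \<bullet> f a \<le> c \<bullet> f b"
      unfolding maximizers_def by blast+
    then show ?thesis
      by (simp add: d_def inner_diff_right)
  qed
  then have dm: "d = m *\<^sub>R e"
    unfolding m_def by (rule eq_projection_if_orthogonal_complement)
  have ee: "e \<bullet> e > 0"
    using assms(1) by (simp add: e_def)
  moreover have "e \<bullet> a - e \<bullet> b = e \<bullet> e"
    by (simp add: e_def inner_diff_right)
  ultimately have "e \<bullet> b < e \<bullet> a"
    by linarith
  then have "maximizers {a, b} e = {a}"
    by (auto simp: maximizers_def)
  then have "maximizers {f a, f b} e = {f a}"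
    using assms(2) by (simp add: face_preserving_def)
  moreover have "f a \<noteq> f b"
    using assms by (auto simp: face_preserving_def)
  ultimately have "f b \<notin> maximizers {f a, f b} e"
    by auto
  then have "e \<bullet> f b < e \<bullet> f a"
    unfolding maximizers_def by auto
  then have "0 < e \<bullet> d"
    by (simp add: d_def inner_diff_right)
  then have "m * (e \<bullet> e) > 0"
    by (simp add: dm)
  with ee have "m > 0"
    by (metis zero_less_mult_pos2)
  with dm show ?thesis
    by (auto simp: d_def e_def)
qed

lemma sphere_diff_not_in_span:
  fixes a b d :: "'a::euclidean_space"
  assumes "a \<in> sphere 0 r" "b \<in> sphere 0 r" "d \<in> sphere 0 r" "a \<noteq> b" "a \<noteq> d" "b \<noteq> d"
  shows "a - d \<notin> span {a - b}"
proof
  assume "a - d \<in> span {a - b}"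
  then obtain k where "a - d = k *\<^sub>R (a - b)"
    by (auto simp: span_singleton)
  then have d: "d = a - k *\<^sub>R (a - b)"
    by (simp add: algebra_simps)
  have sq: "a \<bullet> a = r\<^sup>2" "b \<bullet> b = r\<^sup>2" "d \<bullet> d = r\<^sup>2"
    using assms(1-3) by (auto simp: dot_square_norm)
  define E where "E = (a - b) \<bullet> (a - b)"
  have "E > 0"
    using assms(4) by (simp add: E_def)
  have "E = 2 * r\<^sup>2 - 2 * (a \<bullet> b)"
    using sq by (simp add: E_def inner_diff_left inner_diff_right inner_commute)
  then have ab: "a \<bullet> b = r\<^sup>2 - E / 2"
    by linarith
  have "d \<bullet> d = a \<bullet> a - 2 * k * (a \<bullet> a - a \<bullet> b) + k * k * E"
    unfolding d E_def by (simp add: inner_diff_left inner_diff_right inner_commute algebra_simps)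
  then have "k * k * E - k * E = 0"
    using sq ab by (simp add: algebra_simps)
  then have "k * (k - 1) * E = 0"
    by (simp add: algebra_simps)
  then have "k = 0 \<or> k = 1"
    using \<open>E > 0\<close> by simp
  then show False
    using d assms(5,6) by auto
qed

lemma two_le_dim_span_differences:
  fixes S :: "'a::euclidean_space set"
  assumes "S \<subseteq> sphere 0 r" "3 \<le> card S"
  shows "2 \<le> dim (span {x - y |x y. x \<in> S \<and> y \<in> S})"
proof -
  obtain T where "T \<subseteq> S" "card T = 3"
    using obtain_subset_with_card_n[OF assms(2)] by metis
  then obtain a b d where abd: "a \<in> S" "b \<in> S" "d \<in> S" "a \<noteq> b" "b \<noteq> d" "a \<noteq> d"
    by (auto simp: card_3_iff)
  have "a - d \<notin> span {a - b}"
    using abd assms(1) sphere_diff_not_in_span[of a r b d] by (auto simp: subset_iff)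
  then have ind: "independent {a - d, a - b}"
    using abd by (simp add: independent_insert)
  have sub: "{a - d, a - b} \<subseteq> span {x - y |x y. x \<in> S \<and> y \<in> S}"
    using abd by (auto intro!: span_base)
  have "card {a - d, a - b} = 2"
    using abd by auto
  then show ?thesis
    using independent_card_le_dim[OF sub ind] by simp
qed

lemma maximizers_neq_if_in_span_differences:
  assumes "c \<in> span {x - y |x y. x \<in> S \<and> y \<in> S}" "c \<noteq> 0"
  shows "maximizers S c \<noteq> S"
proof
  assume all: "maximizers S c = S"
  have "orthogonal c g" if g: "g \<in> {x - y |x y. x \<in> S \<and> y \<in> S}" for g
  proof -
    obtain x y where "g = x - y" "x \<in> S" "y \<in> S"
      using g by blast
    moreover from this have "c \<bullet> x \<le> c \<bullet> y" "c \<bullet> y \<le> c \<bullet> x"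
      using all unfolding maximizers_def by blast+
    ultimately show ?thesis
      by (simp add: orthogonal_def inner_diff_right)
  qed
  then have "orthogonal c c"
    using orthogonal_to_span assms(1) by blast
  with assms(2) show False
    by (simp add: orthogonal_def)
qed

lemma ex_span_differences_maximizers_singleton:
  assumes "S \<subseteq> sphere 0 r" "w \<in> S"
  shows "\<exists>y\<in>span {x - y |x y. x \<in> S \<and> y \<in> S}. maximizers S y = {w}"
proof -
  let ?D = "{x - y |x y. x \<in> S \<and> y \<in> S}"
  obtain y z where yz: "y \<in> span ?D" "\<And>x. x \<in> span ?D \<Longrightarrow> orthogonal z x" "w = y + z"
    using orthogonal_subspace_decomp_exists[of ?D w] by blast
  have "maximizers S y = maximizers S w"
  proof (rule maximizers_cong)
    fix x x' assume "x \<in> S" "x' \<in> S"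
    then have "x - x' \<in> span ?D"
      by (blast intro: span_base)
    then have "z \<bullet> (x - x') = 0"
      using yz(2) by (simp add: orthogonal_def)
    then show "y \<bullet> x - y \<bullet> x' = w \<bullet> x - w \<bullet> x'"
      using yz(3) by (simp add: inner_add_left inner_diff_right algebra_simps)
  qed
  then have "maximizers S y = {w}"
    using maximizers_sphere_self[OF assms] by simp
  with yz(1) show ?thesis
    by blast
qed

text \<open>Let k c be the value of f on the face in direction c. Nearby directions select subfaces, so
  k is locally constant on the nonzero vectors of the span M of S - S; this set is connected since
  dim M \<ge> 2, and every point of S is the face in some direction of M.\<close>

lemma constant_if_constant_on_proper_faces:
  fixes S :: "'a::euclidean_space set"
  assumes fin: "finite S" and sph: "S \<subseteq> sphere 0 r" and card: "3 \<le> card S"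
    and faces: "\<And>c x y. maximizers S c \<noteq> S \<Longrightarrow> x \<in> maximizers S c \<Longrightarrow> y \<in> maximizers S c \<Longrightarrow>
      f x = f y"
    and "u \<in> S" "v \<in> S"
  shows "f u = f v"
proof -
  let ?M = "span {x - y |x y. x \<in> S \<and> y \<in> S}"
  define k where "k c = f (SOME x. x \<in> maximizers S c)" for c
  have some_in: "(SOME x. x \<in> maximizers S c) \<in> maximizers S c" for c
    using maximizers_nonempty[OF fin] \<open>u \<in> S\<close> by (auto simp: some_in_eq)
  have conn: "connected (?M - {0})"
    using two_le_dim_span_differences[OF sph card]
    by (intro connected_punctured_convex) (auto simp: subspace_imp_convex aff_dim_subspace)
  have loc: "\<forall>c\<in>?M - {0}. eventually (\<lambda>c'. k c = k c') (at c within ?M - {0})"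
  proof
    fix c assume "c \<in> ?M - {0}"
    then have proper: "maximizers S c \<noteq> S"
      using maximizers_neq_if_in_span_differences by blast
    have "eventually (\<lambda>c'. maximizers S c' \<subseteq> maximizers S c) (at c within ?M - {0})"
      using eventually_maximizers_subset_nhds[OF fin] by (rule filter_leD[rotated]) (simp add: at_within_def)
    then show "eventually (\<lambda>c'. k c = k c') (at c within ?M - {0})"
    proof eventually_elim
      case (elim c')
      then show ?case
        unfolding k_def using faces[OF proper] some_in by blast
    qed
  qed
  have proj: "\<exists>y\<in>?M - {0}. k y = f w" if w: "w \<in> S" for w
  proof -
    obtain y where y: "y \<in> ?M" "maximizers S y = {w}"
      using ex_span_differences_maximizers_singleton[OF sph w] by blast
    have "y \<noteq> 0"
      using y(2) card maximizers_zero[of S] by auto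
    moreover have "k y = f w"
      using y(2) by (simp add: k_def)
    ultimately show ?thesis
      using y(1) by blast
  qed
  obtain yu where yu: "yu \<in> ?M - {0}" "k yu = f u"
    using proj \<open>u \<in> S\<close> by blast
  obtain yv where yv: "yv \<in> ?M - {0}" "k yv = f v"
    using proj \<open>v \<in> S\<close> by blast
  show ?thesis
    using connected_local_const[OF conn yu(1) yv(1) loc] yu(2) yv(2) by simp
qed

lemma sphere_face_induct:
  fixes f :: "'a::euclidean_space \<Rightarrow> 'b"
  assumes "finite S" "S \<subseteq> sphere 0 r" "Q S" "u \<in> S" "v \<in> S"
    and face: "\<And>S c. finite S \<Longrightarrow> S \<subseteq> sphere 0 r \<Longrightarrow> Q S \<Longrightarrow> Q (maximizers S c)"
    and edge: "\<And>a b. a \<noteq> b \<Longrightarrow> a \<in> sphere 0 r \<Longrightarrow> b \<in> sphere 0 r \<Longrightarrow> Q {a, b} \<Longrightarrow> f a = f b"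
  shows "f u = f v"
  using assms(1-5)
proof (induction S arbitrary: u v rule: measure_induct_rule[where f = card])
  case (less S)
  show ?case
  proof (cases "card S \<le> 2")
    case True
    show ?thesis
    proof (cases "u = v")
      case False
      have sub: "{u, v} \<subseteq> S"
        using less.prems by auto
      moreover have "card {u, v} = card S"
        using False True card_mono[OF less.prems(1) sub] by simp
      ultimately have "{u, v} = S"
        using card_subset_eq[OF less.prems(1)] by blast
      then show ?thesis
        using edge[OF False] less.prems by auto
    qed simp
  next
    case False
    show ?thesis
    proof (rule constant_if_constant_on_proper_faces[OF less.prems(1,2) _ _ less.prems(4,5)])
      show "3 \<le> card S"
        using False by simp
      fix c x y assume proper: "maximizers S c \<noteq> S"
        and xy: "x \<in> maximizers S c" "y \<in> maximizers S c"
      have "maximizers S c \<subset> S"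
        using proper maximizers_subset by blast
      moreover have "finite (maximizers S c)" "maximizers S c \<subseteq> sphere 0 r"
        using less.prems(1,2) maximizers_subset finite_subset by fastforce+
      moreover have "Q (maximizers S c)"
        using face less.prems(1-3) by blast
      ultimately show "f x = f y"
        using less.IH[OF psubset_card_mono[OF less.prems(1)]] xy by blast
    qed
  qed
qed

lemma inner_eq_if_norm_add_scaleR_eq:
  fixes x y e :: "'a::real_inner"
  assumes "norm (x + a *\<^sub>R e) = norm x" "norm (y + b *\<^sub>R e) = norm y" "a \<noteq> 0" "b \<noteq> 0"
  shows "(x + a *\<^sub>R e) \<bullet> (y + b *\<^sub>R e) = x \<bullet> y"
proof -
  have "a * (2 * (x \<bullet> e) + a * (e \<bullet> e)) = 0"
    using arg_cong[OF assms(1), of "\<lambda>t. t\<^sup>2"]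
    by (simp add: power2_norm_eq_inner inner_add_left inner_add_right inner_commute algebra_simps)
  then have xe: "x \<bullet> e = - a * (e \<bullet> e) / 2"
    using assms(3) by simp
  have "b * (2 * (y \<bullet> e) + b * (e \<bullet> e)) = 0"
    using arg_cong[OF assms(2), of "\<lambda>t. t\<^sup>2"]
    by (simp add: power2_norm_eq_inner inner_add_left inner_add_right inner_commute algebra_simps)
  then have ye: "y \<bullet> e = - b * (e \<bullet> e) / 2"
    using assms(4) by simp
  have "(x + a *\<^sub>R e) \<bullet> (y + b *\<^sub>R e) = x \<bullet> y + b * (x \<bullet> e) + a * (y \<bullet> e) + a * b * (e \<bullet> e)"
    by (simp add: inner_add_left inner_add_right inner_commute algebra_simps)
  also have "\<dots> = x \<bullet> y"
    by (simp add: xe ye algebra_simps)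
  finally show ?thesis .
qed

lemma inner_constant_if_face_preserving:
  assumes "finite V" "V \<subseteq> sphere 0 r"
    and "face_preserving V f" "f ` V \<subseteq> sphere 0 s"
    and "face_preserving V g" "g ` V \<subseteq> sphere 0 t"
    and "u \<in> V" "v \<in> V"
  shows "f u \<bullet> g u = f v \<bullet> g v"
proof (rule sphere_face_induct[where r = r and Q = "\<lambda>S. face_preserving S f \<and> f ` S \<subseteq> sphere 0 s \<and>
    face_preserving S g \<and> g ` S \<subseteq> sphere 0 t"])
  fix S c assume S: "finite S" "S \<subseteq> sphere 0 r" and Q: "face_preserving S f \<and> f ` S \<subseteq> sphere 0 s \<and>
    face_preserving S g \<and> g ` S \<subseteq> sphere 0 t"
  have "maximizers S c \<subseteq> S"
    by (rule maximizers_subset)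
  with Q show "face_preserving (maximizers S c) f \<and> f ` maximizers S c \<subseteq> sphere 0 s \<and>
      face_preserving (maximizers S c) g \<and> g ` maximizers S c \<subseteq> sphere 0 t"
    using face_preserving_maximizers[OF S(1)] by blast
next
  fix a b assume ab: "a \<noteq> b" and "a \<in> sphere 0 r" "b \<in> sphere 0 r"
    and Q: "face_preserving {a, b} f \<and> f ` {a, b} \<subseteq> sphere 0 s \<and>
    face_preserving {a, b} g \<and> g ` {a, b} \<subseteq> sphere 0 t"
  obtain l m where l: "l > 0" "f a - f b = l *\<^sub>R (a - b)" and m: "m > 0" "g a - g b = m *\<^sub>R (a - b)"
    using face_preserving_edge[OF ab] Q by meson
  then have "f a = f b + l *\<^sub>R (a - b)" "g a = g b + m *\<^sub>R (a - b)"
    by (simp_all add: algebra_simps)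
  moreover have "norm (f a) = norm (f b)" "norm (g a) = norm (g b)"
    using Q by auto
  ultimately show "f a \<bullet> g a = f b \<bullet> g b"
    using inner_eq_if_norm_add_scaleR_eq[of "f b" l "a - b" "g b" m] l(1) m(1) by simp
qed (use assms in auto)

lemma norm_sum_constant_if_face_preserving:
  assumes "finite V" "V \<subseteq> sphere 0 r"
    and "\<And>i. i \<in> I \<Longrightarrow> face_preserving V (\<phi> i) \<and> (\<exists>s. \<phi> i ` V \<subseteq> sphere 0 s)"
    and "u \<in> V" "v \<in> V"
  shows "norm (\<Sum>i\<in>I. \<phi> i u) = norm (\<Sum>i\<in>I. \<phi> i v)"
proof -
  have "\<phi> i u \<bullet> \<phi> j u = \<phi> i v \<bullet> \<phi> j v" if ij: "i \<in> I" "j \<in> I" for i j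
  proof -
    obtain s t where "\<phi> i ` V \<subseteq> sphere 0 s" "\<phi> j ` V \<subseteq> sphere 0 t"
      using assms(3)[OF ij(1)] assms(3)[OF ij(2)] by blast
    with assms(3)[OF ij(1)] assms(3)[OF ij(2)] show ?thesis
      using inner_constant_if_face_preserving[OF assms(1,2) _ _ _ _ assms(4,5)] by simp
  qed
  then have "(\<Sum>i\<in>I. \<phi> i u) \<bullet> (\<Sum>i\<in>I. \<phi> i u) = (\<Sum>i\<in>I. \<phi> i v) \<bullet> (\<Sum>i\<in>I. \<phi> i v)"
    by (simp add: inner_sum_left inner_sum_right)
  then show ?thesis
    by (simp add: norm_eq_sqrt_inner)
qed

lemma orthogonal_transformation_face_preserving_translation:
  assumes "finite V" "V \<subseteq> sphere 0 r" "orthogonal_transformation n" "face_preserving V n"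
    and "u \<in> V" "v \<in> V"
  shows "n u - u = n v - v"
proof (rule sphere_face_induct[where f = "\<lambda>x. n x - x" and r = r and Q = "\<lambda>S. face_preserving S n"])
  fix a b assume ab: "a \<noteq> b" and "a \<in> sphere 0 r" "b \<in> sphere 0 r" "face_preserving {a, b} n"
  with ab obtain l where l: "l > 0" "n a - n b = l *\<^sub>R (a - b)"
    using face_preserving_edge by blast
  then have "n (a - b) = l *\<^sub>R (a - b)"
    using linear_diff[OF orthogonal_transformation_linear[OF assms(3)]] by simp
  then have "norm (a - b) = l * norm (a - b)"
    using orthogonal_transformation_norm[OF assms(3), of "a - b"] l(1) by simp
  with ab have "l = 1"
    by simp
  with l show "n a - a = n b - b"
    by (simp add: algebra_simps)
qed (use assms face_preserving_maximizers in auto)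

section \<open>Normal fans of convex hulls\<close>

lemma inner_le_maximizers_convex_hull:
  assumes "v \<in> maximizers V c" "x \<in> convex hull V"
  shows "c \<bullet> x \<le> c \<bullet> v"
proof -
  have "convex hull V \<subseteq> {x. c \<bullet> x \<le> c \<bullet> v}"
    using assms(1) by (intro hull_minimal) (auto simp: maximizers_def convex_halfspace_le)
  with assms(2) show ?thesis
    by auto
qed

lemma convex_hull_maximizers:
  assumes "finite V" "v \<in> maximizers V c"
  shows "convex hull V \<inter> {x. c \<bullet> x = c \<bullet> v} = convex hull (maximizers V c)"
proof
  let ?F = "convex hull V \<inter> {x. c \<bullet> x = c \<bullet> v}"
  have "?F face_of convex hull V"
    using inner_le_maximizers_convex_hull[OF assms(2)] by (intro face_of_Int_supporting_hyperplane_le) auto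
  then obtain T where T: "T \<subseteq> V" "?F = convex hull T"
    using face_of_convex_hull_subset[OF finite_imp_compact[OF assms(1)]] by metis
  have "T \<subseteq> maximizers V c"
  proof
    fix t assume "t \<in> T"
    then have "t \<in> V" "c \<bullet> t = c \<bullet> v"
      using T hull_subset[of T convex] by auto
    with assms(2) show "t \<in> maximizers V c"
      by (auto simp: maximizers_def)
  qed
  then show "?F \<subseteq> convex hull (maximizers V c)"
    unfolding T(2) by (rule hull_mono)
next
  have "maximizers V c \<subseteq> convex hull V \<inter> {x. c \<bullet> x = c \<bullet> v}"
    using assms(2) hull_subset[of V convex] maximizers_subset[of V c] maximizers_inner_eq[of _ V c v]
    by blast
  then show "convex hull (maximizers V c) \<subseteq> convex hull V \<inter> {x. c \<bullet> x = c \<bullet> v}"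
    by (intro hull_minimal convex_Int convex_convex_hull convex_hyperplane)
qed

lemma normal_cone_convex_hull_maximizers:
  assumes "finite V" "V \<noteq> {}"
  shows "normal_cone (convex hull V) (convex hull (maximizers V c)) = face_normal_cone V c"
proof (intro set_eqI iffI)
  fix c' assume c': "c' \<in> normal_cone (convex hull V) (convex hull (maximizers V c))"
  have "maximizers V c \<subseteq> maximizers V c'"
  proof
    fix v assume v: "v \<in> maximizers V c"
    then have "v \<in> convex hull (maximizers V c)"
      by (rule hull_inc)
    then have "\<forall>y\<in>convex hull V. c' \<bullet> y \<le> c' \<bullet> v"
      using c' by (simp add: normal_cone_def)
    moreover have "V \<subseteq> convex hull V"
      by (rule hull_subset)
    moreover have "v \<in> V"
      using v maximizers_subset by blast
    ultimately show "v \<in> maximizers V c'"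
      by (auto simp: maximizers_def)
  qed
  then show "c' \<in> face_normal_cone V c"
    by (simp add: face_normal_cone_def)
next
  fix c' assume "c' \<in> face_normal_cone V c"
  then have sub: "maximizers V c \<subseteq> maximizers V c'"
    by (simp add: face_normal_cone_def)
  obtain v' where v': "v' \<in> maximizers V c'"
    using maximizers_nonempty[OF assms] by blast
  have "maximizers V c \<subseteq> {x. c' \<bullet> x = c' \<bullet> v'}"
    using sub v' maximizers_inner_eq[of _ V c' v'] by blast
  then have "convex hull (maximizers V c) \<subseteq> {x. c' \<bullet> x = c' \<bullet> v'}"
    by (intro hull_minimal convex_hyperplane)
  moreover have "c' \<bullet> y \<le> c' \<bullet> v'" if "y \<in> convex hull V" for y
    using inner_le_maximizers_convex_hull[OF v' that] .
  ultimately show "c' \<in> normal_cone (convex hull V) (convex hull (maximizers V c))"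
    unfolding normal_cone_def by auto
qed

lemma normal_fan_convex_hull:
  assumes "finite V" "V \<noteq> {}"
  shows "normal_fan (convex hull V) = range (face_normal_cone V)"
proof (intro set_eqI iffI)
  fix C assume "C \<in> normal_fan (convex hull V)"
  then obtain F where F: "C = normal_cone (convex hull V) F" "F face_of convex hull V" "F \<noteq> {}"
    by (auto simp: normal_fan_def)
  have "F exposed_face_of convex hull V"
    using F(2) assms(1) by (simp add: exposed_face_of_polyhedron polytope_convex_hull polytope_imp_polyhedron)
  then obtain a b where ab: "convex hull V \<subseteq> {x. a \<bullet> x \<le> b}" "F = convex hull V \<inter> {x. a \<bullet> x = b}"
    by (auto simp: exposed_face_of_def)
  obtain v where v: "v \<in> maximizers V a"
    using maximizers_nonempty[OF assms] by blast
  have "b = a \<bullet> v"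
  proof (rule order.antisym)
    obtain x where "x \<in> F"
      using F(3) by blast
    then show "b \<le> a \<bullet> v"
      using ab(2) inner_le_maximizers_convex_hull[OF v] by auto
    show "a \<bullet> v \<le> b"
      using ab(1) v maximizers_subset hull_subset[of V convex] by blast
  qed
  then have "F = convex hull (maximizers V a)"
    using ab(2) convex_hull_maximizers[OF assms(1) v] by simp
  then show "C \<in> range (face_normal_cone V)"
    using F(1) normal_cone_convex_hull_maximizers[OF assms] by auto
next
  fix C assume "C \<in> range (face_normal_cone V)"
  then obtain c where C: "C = face_normal_cone V c"
    by auto
  obtain v where v: "v \<in> maximizers V c"
    using maximizers_nonempty[OF assms] by blast
  have "convex hull (maximizers V c) face_of convex hull V"
    unfolding convex_hull_maximizers[OF assms(1) v, symmetric]
    using inner_le_maximizers_convex_hull[OF v] by (intro face_of_Int_supporting_hyperplane_le) auto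
  moreover have "convex hull (maximizers V c) \<noteq> {}"
    using v by auto
  ultimately show "C \<in> normal_fan (convex hull V)"
    unfolding normal_fan_def C normal_cone_convex_hull_maximizers[OF assms, symmetric] by blast
qed

lemma face_normal_cone_self: "c \<in> face_normal_cone V c"
  by (simp add: face_normal_cone_def)

lemma face_normal_cone_subset: "c \<in> face_normal_cone V d \<Longrightarrow> face_normal_cone V c \<subseteq> face_normal_cone V d"
  by (auto simp: face_normal_cone_def)

lemma face_normal_cone_eq_if_range_eq:
  assumes "range (face_normal_cone V) = range (face_normal_cone W)"
  shows "face_normal_cone V = face_normal_cone W"
proof
  fix c
  have "face_normal_cone W c \<in> range (face_normal_cone V)" "face_normal_cone V c \<in> range (face_normal_cone W)"
    using assms by auto
  then obtain d e where d: "face_normal_cone W c = face_normal_cone V d"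
    and e: "face_normal_cone V c = face_normal_cone W e"
    by blast
  show "face_normal_cone V c = face_normal_cone W c"
    using face_normal_cone_subset[of c V d] face_normal_cone_subset[of c W e]
      face_normal_cone_self[of c V] face_normal_cone_self[of c W] d e
    by blast
qed

lemma face_normal_cone_image:
  assumes "face_preserving V f"
  shows "face_normal_cone (f ` V) = face_normal_cone V"
proof
  fix c
  have inj: "inj_on f V"
    using assms by (simp add: face_preserving_def)
  have "f ` maximizers V c \<subseteq> f ` maximizers V c' \<longleftrightarrow> maximizers V c \<subseteq> maximizers V c'" for c'
    using inj_on_image_subset_iff[OF inj maximizers_subset maximizers_subset] .
  with assms show "face_normal_cone (f ` V) c = face_normal_cone V c"
    by (simp add: face_normal_cone_def face_preserving_def)
qed

lemma face_preserving_translation: "face_preserving V (\<lambda>x. p + x)"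
  by (auto simp: face_preserving_def maximizers_def inner_add_right)

lemma maximizers_orthogonal_image:
  fixes g :: "'a::euclidean_space \<Rightarrow> 'a"
  assumes "orthogonal_transformation g"
  shows "maximizers (g ` V) c = g ` maximizers V (inv g c)"
proof -
  have "g (inv g c) = c"
    using orthogonal_transformation_surj[OF assms] by (simp add: surj_f_inv_f)
  then have "c \<bullet> g x = inv g c \<bullet> x" for x
    using assms unfolding orthogonal_transformation_def by metis
  then show ?thesis
    by (auto simp: maximizers_def)
qed

lemma face_normal_cone_orthogonal_image:
  fixes g :: "'a::euclidean_space \<Rightarrow> 'a"
  assumes "orthogonal_transformation g"
  shows "face_normal_cone (g ` V) c = g ` face_normal_cone V (inv g c)"
proof -
  have "bij g"
    using assms by (rule orthogonal_transformation_bij)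
  then have "c' \<in> g ` A \<longleftrightarrow> inv g c' \<in> A" for c' A
    by (metis bij_inv_eq_iff image_iff)
  then show ?thesis
    using \<open>bij g\<close>
    by (auto simp: face_normal_cone_def maximizers_orthogonal_image[OF assms] bij_is_inj inj_image_subset_iff)
qed

lemma face_normal_cone_orthogonal_image_eq:
  fixes g :: "'a::euclidean_space \<Rightarrow> 'a"
  assumes "orthogonal_transformation g"
    and "(\<lambda>C. g ` C) ` range (face_normal_cone V) = range (face_normal_cone V)"
  shows "face_normal_cone (g ` V) = face_normal_cone V"
proof (rule face_normal_cone_eq_if_range_eq)
  have "surj (inv g)"
    using assms(1) orthogonal_transformation_bij bij_imp_bij_inv bij_is_surj by blast
  then have "range (face_normal_cone (g ` V)) = (\<lambda>C. g ` C) ` range (face_normal_cone V)"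
    unfolding face_normal_cone_orthogonal_image[OF assms(1)]
    using image_image[of "\<lambda>c. g ` face_normal_cone V c" "inv g" UNIV] by (simp add: image_image)
  with assms(2) show "range (face_normal_cone (g ` V)) = range (face_normal_cone V)"
    by simp
qed

section \<open>Inscribed realizations of a common normal fan\<close>

text \<open>On a sphere, v is the unique maximizer in direction v. If W has the same normal cones as V,
  the face of W in direction v therefore cannot contain two points: tilting v towards one of them
  isolates it without leaving the normal cone of v.\<close>

lemma maximizers_singleton_if_same_face_normal_cone:
  assumes "finite V" "finite W" "W \<noteq> {}" "V \<subseteq> sphere 0 r" "W \<subseteq> sphere 0 s"
    and same: "face_normal_cone V = face_normal_cone W" and v: "v \<in> V"
  shows "\<exists>w. maximizers W v = {w}"
proof -
  have iff: "maximizers V c \<subseteq> maximizers V c' \<longleftrightarrow> maximizers W c \<subseteq> maximizers W c'" for c c'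
    using same by (auto simp: face_normal_cone_def fun_eq_iff)
  obtain w1 where w1: "w1 \<in> maximizers W v"
    using maximizers_nonempty[OF assms(2,3)] by blast
  have "w = w1" if w: "w \<in> maximizers W v" for w
  proof -
    obtain t where t: "maximizers W (v + t *\<^sub>R w1) = maximizers (maximizers W v) w1"
      using eventually_happens'[OF trivial_limit_at_right_real eventually_maximizers_perturb[OF assms(2)]]
      by blast
    have "maximizers W v \<subseteq> sphere 0 s"
      using assms(5) maximizers_subset by blast
    then have t1: "maximizers W (v + t *\<^sub>R w1) = {w1}"
      using t maximizers_sphere_self[OF _ w1] by simp
    then have "maximizers V (v + t *\<^sub>R w1) \<subseteq> maximizers V v"
      using iff[of "v + t *\<^sub>R w1" v] w1 by simp
    then have "maximizers V (v + t *\<^sub>R w1) = maximizers V v"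
      using maximizers_nonempty[OF assms(1), of "v + t *\<^sub>R w1"] v
      unfolding maximizers_sphere_self[OF assms(4) v] by blast
    then have "maximizers W v \<subseteq> maximizers W (v + t *\<^sub>R w1)"
      using iff[of v "v + t *\<^sub>R w1"] by simp
    with w t1 show ?thesis
      by blast
  qed
  with w1 show ?thesis
    by blast
qed

lemma ex_face_preserving_onto:
  assumes fin: "finite V" "finite W" and ne: "V \<noteq> {}" "W \<noteq> {}"
    and sph: "V \<subseteq> sphere 0 r" "W \<subseteq> sphere 0 s"
    and same: "face_normal_cone V = face_normal_cone W"
  shows "\<exists>\<phi>. face_preserving V \<phi> \<and> \<phi> ` V = W"
proof -
  have "\<forall>v\<in>V. \<exists>w. maximizers W v = {w}"
    using maximizers_singleton_if_same_face_normal_cone[OF fin ne(2) sph same] by blast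
  then obtain \<phi> where \<phi>: "\<And>v. v \<in> V \<Longrightarrow> maximizers W v = {\<phi> v}"
    by metis
  have mem: "\<phi> v \<in> maximizers W c \<longleftrightarrow> v \<in> maximizers V c" if v: "v \<in> V" for v c
  proof -
    have "\<phi> v \<in> maximizers W c \<longleftrightarrow> c \<in> face_normal_cone W v"
      using \<phi>[OF v] by (simp add: face_normal_cone_def)
    also have "\<dots> \<longleftrightarrow> v \<in> maximizers V c"
      using maximizers_sphere_self[OF sph(1) v] by (simp add: same[symmetric] face_normal_cone_def)
    finally show ?thesis .
  qed
  have onto: "\<phi> ` V = W"
  proof
    show "\<phi> ` V \<subseteq> W"
      using \<phi> maximizers_subset by blast
    show "W \<subseteq> \<phi> ` V"
    proof
      fix w assume w: "w \<in> W"
      obtain v where v: "maximizers V w = {v}"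
        using maximizers_singleton_if_same_face_normal_cone[OF fin(2,1) ne(1) sph(2,1) same[symmetric] w]
        by blast
      then have "v \<in> V"
        using maximizers_subset by blast
      with v mem have "\<phi> v \<in> maximizers W w"
        by blast
      then have "\<phi> v = w"
        using maximizers_sphere_self[OF sph(2) w] by blast
      with \<open>v \<in> V\<close> show "w \<in> \<phi> ` V"
        by blast
    qed
  qed
  have "inj_on \<phi> V"
  proof (rule inj_onI)
    fix u v assume uv: "u \<in> V" "v \<in> V" "\<phi> u = \<phi> v"
    then have "v \<in> maximizers V u"
      using mem \<phi>[OF uv(1)] by (metis singletonI)
    then show "u = v"
      using maximizers_sphere_self[OF sph(1) uv(1)] by simp
  qed
  with mem onto have "face_preserving V \<phi>"
    by (simp add: face_preserving_iff_mem_maximizers)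
  with onto show ?thesis
    by blast
qed

lemma mem_convex_hull_if_inner_le:
  fixes x :: "'a::euclidean_space"
  assumes "finite B" "\<And>c. \<exists>b\<in>B. c \<bullet> x \<le> c \<bullet> b"
  shows "x \<in> convex hull B"
proof (rule ccontr)
  assume "x \<notin> convex hull B"
  moreover have "closed (convex hull B)"
    using assms(1) by (simp add: compact_imp_closed finite_imp_compact_convex_hull)
  ultimately obtain a b where "a \<bullet> x < b" "\<forall>y\<in>convex hull B. a \<bullet> y > b"
    using separating_hyperplane_closed_point[OF convex_convex_hull] by blast
  moreover obtain y where "y \<in> B" "(- a) \<bullet> x \<le> (- a) \<bullet> y"
    using assms(2) by blast
  ultimately show False
    using hull_subset[of B convex] by force
qed

lemma face_preserving_sum:
  assumes I: "finite I" "I \<noteq> {}" and V: "finite V" "V \<subseteq> sphere 0 r"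
    and \<phi>: "\<And>i. i \<in> I \<Longrightarrow> face_preserving V (\<phi> i)"
  shows "face_preserving V (\<lambda>v. \<Sum>i\<in>I. \<phi> i v)"
proof -
  let ?\<psi> = "\<lambda>v. \<Sum>i\<in>I. \<phi> i v"
  have mem: "?\<psi> v \<in> maximizers (?\<psi> ` V) c \<longleftrightarrow> v \<in> maximizers V c" if v: "v \<in> V" for v c
  proof -
    obtain v0 where v0: "v0 \<in> maximizers V c"
      using maximizers_nonempty[OF V(1)] v by blast
    then have "v0 \<in> V"
      using maximizers_subset by blast
    then have max0: "\<phi> i v0 \<in> maximizers (\<phi> i ` V) c" if "i \<in> I" for i
      using \<phi>[OF that] v0 by (simp add: face_preserving_iff_mem_maximizers)
    then have le: "c \<bullet> \<phi> i u \<le> c \<bullet> \<phi> i v0" if "i \<in> I" "u \<in> V" for i u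
      using that by (auto simp: maximizers_def)
    then have sum_le: "c \<bullet> ?\<psi> u \<le> c \<bullet> ?\<psi> v0" if "u \<in> V" for u
      using that by (simp add: inner_sum_right sum_mono)
    have "?\<psi> v \<in> maximizers (?\<psi> ` V) c \<longleftrightarrow> c \<bullet> ?\<psi> v0 \<le> c \<bullet> ?\<psi> v"
      using v \<open>v0 \<in> V\<close> sum_le by (auto simp: maximizers_def intro: order_trans)
    also have "\<dots> \<longleftrightarrow> (\<Sum>i\<in>I. c \<bullet> \<phi> i v0 - c \<bullet> \<phi> i v) = 0"
      using sum_nonneg[of I "\<lambda>i. c \<bullet> \<phi> i v0 - c \<bullet> \<phi> i v"] le v
      by (simp add: inner_sum_right sum_subtractf)
    also have "\<dots> \<longleftrightarrow> (\<forall>i\<in>I. c \<bullet> \<phi> i v0 - c \<bullet> \<phi> i v = 0)"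
      using sum_nonneg_eq_0_iff[OF I(1), of "\<lambda>i. c \<bullet> \<phi> i v0 - c \<bullet> \<phi> i v"] le v by simp
    also have "\<dots> \<longleftrightarrow> (\<forall>i\<in>I. \<phi> i v \<in> maximizers (\<phi> i ` V) c)"
      using le v \<open>v0 \<in> V\<close> by (auto simp: maximizers_def intro!: order.antisym)
    also have "\<dots> \<longleftrightarrow> v \<in> maximizers V c"
      using \<phi> v I(2) by (auto simp: face_preserving_iff_mem_maximizers)
    finally show ?thesis .
  qed
  have "inj_on ?\<psi> V"
  proof (rule inj_onI)
    fix u v assume uv: "u \<in> V" "v \<in> V" "?\<psi> u = ?\<psi> v"
    have "?\<psi> u \<in> maximizers (?\<psi> ` V) u"
      using mem[OF uv(1)] maximizers_sphere_self[OF V(2) uv(1)] by simp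
    then have "v \<in> maximizers V u"
      using mem[OF uv(2)] uv(3) by simp
    then show "u = v"
      using maximizers_sphere_self[OF V(2) uv(1)] by simp
  qed
  with mem show ?thesis
    by (simp add: face_preserving_iff_mem_maximizers)
qed

lemma convex_hull_set_sum_face_preserving:
  assumes I: "finite I" and V: "finite V" "V \<noteq> {}"
    and \<phi>: "\<And>i. i \<in> I \<Longrightarrow> face_preserving V (\<phi> i)"
  shows "convex hull (\<Sum>i\<in>I. \<phi> i ` V) = convex hull ((\<lambda>v. \<Sum>i\<in>I. \<phi> i v) ` V)"
proof (rule order.antisym)
  let ?\<psi> = "\<lambda>v. \<Sum>i\<in>I. \<phi> i v"
  have "?\<psi> ` V \<subseteq> (\<Sum>i\<in>I. \<phi> i ` V)"
    by (auto simp: set_sum_alt[OF I])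
  then show "convex hull (?\<psi> ` V) \<subseteq> convex hull (\<Sum>i\<in>I. \<phi> i ` V)"
    by (rule hull_mono)
  have "(\<Sum>i\<in>I. \<phi> i ` V) \<subseteq> convex hull (?\<psi> ` V)"
  proof
    fix x assume "x \<in> (\<Sum>i\<in>I. \<phi> i ` V)"
    then obtain y where x: "x = (\<Sum>i\<in>I. y i)" and y: "\<And>i. i \<in> I \<Longrightarrow> y i \<in> \<phi> i ` V"
      by (auto simp: set_sum_alt[OF I])
    show "x \<in> convex hull (?\<psi> ` V)"
    proof (rule mem_convex_hull_if_inner_le)
      fix c
      obtain v0 where v0: "v0 \<in> maximizers V c"
        using maximizers_nonempty[OF V] by blast
      then have "\<phi> i v0 \<in> maximizers (\<phi> i ` V) c" if "i \<in> I" for i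
        using \<phi>[OF that] by (simp add: face_preserving_def)
      then have "c \<bullet> y i \<le> c \<bullet> \<phi> i v0" if "i \<in> I" for i
        using y[OF that] that by (auto simp: maximizers_def)
      then have "c \<bullet> x \<le> c \<bullet> ?\<psi> v0"
        by (simp add: x inner_sum_right sum_mono)
      moreover have "v0 \<in> V"
        using v0 maximizers_subset by blast
      ultimately show "\<exists>b\<in>?\<psi> ` V. c \<bullet> x \<le> c \<bullet> b"
        by blast
    qed (use V in simp)
  qed
  then show "convex hull (\<Sum>i\<in>I. \<phi> i ` V) \<subseteq> convex hull (?\<psi> ` V)"
    by (simp add: hull_minimal)
qed

lemma inscribed_convex_hull_sphere:
  assumes "finite W" "W \<subseteq> sphere 0 \<rho>"
  shows "inscribed (convex hull W)"
proof -
  have "x \<in> sphere 0 \<rho>" if "x extreme_point_of convex hull W" for x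
    using extreme_point_of_convex_hull[OF that] assms(2) by blast
  with polytope_convex_hull[OF assms(1)] show ?thesis
    unfolding inscribed_def by blast
qed

lemma inscribed_convex_hull_set_sum:
  fixes \<U> :: "'a::euclidean_space set set"
  assumes fin: "finite \<U>" and "V \<in> \<U>"
    and \<U>: "\<And>U. U \<in> \<U> \<Longrightarrow>
      finite U \<and> U \<noteq> {} \<and> (\<exists>r. U \<subseteq> sphere 0 r) \<and> face_normal_cone U = face_normal_cone V"
  shows "inscribed (convex hull \<Sum>\<U>)" "normal_fan (convex hull \<Sum>\<U>) = range (face_normal_cone V)"
proof -
  obtain r where V: "finite V" "V \<noteq> {}" "V \<subseteq> sphere 0 r"
    using \<U>[OF \<open>V \<in> \<U>\<close>] by blast
  have "\<exists>\<phi>. face_preserving V \<phi> \<and> \<phi> ` V = U" if U: "U \<in> \<U>" for U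
  proof -
    obtain s where "finite U" "U \<noteq> {}" "U \<subseteq> sphere 0 s" "face_normal_cone V = face_normal_cone U"
      using \<U>[OF U] by auto
    then show ?thesis
      by (intro ex_face_preserving_onto[OF V(1) _ V(2) _ V(3)])
  qed
  then obtain \<phi> where \<phi>: "\<And>U. U \<in> \<U> \<Longrightarrow> face_preserving V (\<phi> U) \<and> \<phi> U ` V = U"
    by metis
  define \<psi> where "\<psi> v = (\<Sum>U\<in>\<U>. \<phi> U v)" for v
  obtain v0 where "v0 \<in> V"
    using V(2) by blast
  have "\<Sum>\<U> = (\<Sum>U\<in>\<U>. \<phi> U ` V)"
    using \<phi> by simp
  moreover have "convex hull (\<Sum>U\<in>\<U>. \<phi> U ` V) = convex hull (\<psi> ` V)"
    unfolding \<psi>_def using \<phi> by (intro convex_hull_set_sum_face_preserving[OF fin V(1,2)]) blast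
  ultimately have hull: "convex hull \<Sum>\<U> = convex hull (\<psi> ` V)"
    by simp
  have "\<U> \<noteq> {}"
    using \<open>V \<in> \<U>\<close> by blast
  then have "face_preserving V \<psi>"
    unfolding \<psi>_def using \<phi> by (intro face_preserving_sum[OF fin _ V(1,3)]) blast+
  have "face_preserving V (\<phi> U) \<and> (\<exists>s. \<phi> U ` V \<subseteq> sphere 0 s)" if "U \<in> \<U>" for U
    using \<phi>[OF that] \<U>[OF that] by auto
  then have "norm (\<psi> v) = norm (\<psi> v0)" if "v \<in> V" for v
    unfolding \<psi>_def using norm_sum_constant_if_face_preserving[OF V(1,3) _ that \<open>v0 \<in> V\<close>] by blast
  then have "\<psi> ` V \<subseteq> sphere 0 (norm (\<psi> v0))"
    by auto
  then show "inscribed (convex hull \<Sum>\<U>)"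
    unfolding hull using V(1) by (intro inscribed_convex_hull_sphere) simp_all
  show "normal_fan (convex hull \<Sum>\<U>) = range (face_normal_cone V)"
    using normal_fan_convex_hull[of "\<psi> ` V"] V face_normal_cone_image[OF \<open>face_preserving V \<psi>\<close>]
    by (simp add: hull)
qed

lemma linear_image_set_sum:
  fixes g :: "'a::real_vector \<Rightarrow> 'b::real_vector"
  assumes "linear g"
  shows "g ` (\<Sum>i\<in>I. A i) = (\<Sum>i\<in>I. g ` A i)"
proof (induction I rule: infinite_finite_induct)
  case (insert i I)
  have "g ` (A i + B) = g ` A i + g ` B" for B
    unfolding set_plus_image image_image by (force simp: linear_add[OF assms] split_def image_iff)
  with insert show ?case
    by simp
qed (simp_all add: set_zero linear_0[OF assms])

lemma image_convex_hull_set_sum_eq: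
  fixes g :: "'a::euclidean_space \<Rightarrow> 'a"
  assumes "linear g" "inj g" "(\<lambda>U. g ` U) ` \<U> = \<U>"
  shows "g ` (convex hull \<Sum>\<U>) = convex hull \<Sum>\<U>"
proof -
  have "g ` \<Sum>\<U> = (\<Sum>U\<in>\<U>. g ` U)"
    by (rule linear_image_set_sum[OF assms(1)])
  also have "\<dots> = \<Sum>((\<lambda>U. g ` U) ` \<U>)"
    using assms(2) by (simp add: sum.reindex inj_on_def inj_image_eq_iff comp_def)
  also have "\<dots> = \<Sum>\<U>"
    using assms(3) by simp
  finally show ?thesis
    by (simp add: convex_hull_linear_image[OF assms(1)])
qed

section \<open>Symmetrization over the orbit\<close>

lemma sphere_center_in_affine_hull:
  fixes V :: "'a::euclidean_space set"
  assumes "V \<subseteq> sphere z r" "v0 \<in> V"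
  shows "\<exists>p \<rho>. p \<in> affine hull V \<and> V \<subseteq> sphere p \<rho>"
proof -
  let ?D = "(\<lambda>x. - v0 + x) ` V"
  obtain y w where y: "y \<in> span ?D" and w: "\<And>x. x \<in> span ?D \<Longrightarrow> orthogonal w x"
    and zyw: "z - v0 = y + w"
    using orthogonal_subspace_decomp_exists[of ?D "z - v0"] by blast
  define p where "p = v0 + y"
  have "p \<in> affine hull V"
    using y affine_hull_span_gen[of v0 V] assms(2) by (auto simp: p_def hull_inc)
  moreover have "norm (v - p) = sqrt (r\<^sup>2 - (norm w)\<^sup>2)" if v: "v \<in> V" for v
  proof -
    have vp: "v - p = (- v0 + v) - y"
      by (simp add: p_def)
    have "- v0 + v \<in> span ?D"
      using v by (intro span_base) auto
    then have "v - p \<in> span ?D"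
      unfolding vp using y by (rule span_diff)
    then have "orthogonal (v - p) (- w)"
      using w[OF \<open>v - p \<in> span ?D\<close>] by (simp add: orthogonal_def inner_commute)
    then have "(norm (v - p + - w))\<^sup>2 = (norm (v - p))\<^sup>2 + (norm (- w))\<^sup>2"
      by (rule norm_add_Pythagorean)
    moreover have "v - p + - w = v - z"
      using zyw by (simp add: p_def algebra_simps)
    moreover have "norm (v - z) = r"
      using assms(1) v by (auto simp: dist_norm norm_minus_commute)
    ultimately have "(norm (v - p))\<^sup>2 = r\<^sup>2 - (norm w)\<^sup>2"
      by (simp only: norm_minus_cancel)
    then show ?thesis
      using real_sqrt_unique[OF _ norm_ge_zero] by metis
  qed
  then have "V \<subseteq> sphere p (sqrt (r\<^sup>2 - (norm w)\<^sup>2))"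
    by (auto simp: dist_norm norm_minus_commute)
  ultimately show ?thesis
    by blast
qed

lemma inscribed_centered_vertices:
  assumes "inscribed P" "P \<noteq> {}"
  obtains V \<rho> where "finite V" "V \<noteq> {}" "V \<subseteq> sphere 0 \<rho>" "0 \<in> affine hull V"
    "normal_fan P = range (face_normal_cone V)"
proof -
  define V0 where "V0 = {v. v extreme_point_of P}"
  obtain z r where "V0 \<subseteq> sphere z r" and "polytope P"
    using assms(1) unfolding inscribed_def V0_def by blast
  then have fin: "finite V0" and P: "P = convex hull V0"
    unfolding V0_def
    by (simp_all add: finite_polyhedron_extreme_points polytope_imp_polyhedron Krein_Milman_Minkowski
        polytope_imp_compact polytope_imp_convex)
  then obtain v0 where "v0 \<in> V0"
    using assms(2) by fastforce
  then obtain p \<rho> where p: "p \<in> affine hull V0" "V0 \<subseteq> sphere p \<rho>"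
    using sphere_center_in_affine_hull[OF \<open>V0 \<subseteq> sphere z r\<close>] by blast
  define V where "V = (\<lambda>x. - p + x) ` V0"
  have "finite V" "V \<noteq> {}"
    using fin \<open>v0 \<in> V0\<close> by (auto simp: V_def)
  moreover have "V \<subseteq> sphere 0 \<rho>"
    using p(2) by (auto simp: V_def dist_norm norm_minus_commute)
  moreover have "affine hull V = (\<lambda>x. - p + x) ` (affine hull V0)"
    unfolding V_def by (rule affine_hull_translation)
  with p(1) have "0 \<in> affine hull V"
    by (metis add.left_inverse image_eqI)
  moreover have "face_normal_cone V = face_normal_cone V0"
    unfolding V_def by (rule face_normal_cone_image[OF face_preserving_translation])
  with fin \<open>v0 \<in> V0\<close> have "normal_fan P = range (face_normal_cone V)"
    unfolding P by (subst normal_fan_convex_hull) auto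
  ultimately show ?thesis
    by (rule that)
qed

text \<open>An orthogonal map preserving every cone of the normal fan acts on V as a face preserving
  map, hence as a translation; the translation is trivial because 0 is an affine combination of V.\<close>

lemma orthogonal_transformation_fixes_vertices:
  assumes V: "finite V" "V \<subseteq> sphere 0 r" "0 \<in> affine hull V"
    and n: "orthogonal_transformation n" "\<And>C. C \<in> range (face_normal_cone V) \<Longrightarrow> n ` C = C"
    and "v \<in> V"
  shows "n v = v"
proof -
  have maximizers_n: "maximizers V (n c) = maximizers V c" for c
  proof
    have "n c \<in> n ` face_normal_cone V c"
      by (simp add: face_normal_cone_self)
    then show "maximizers V c \<subseteq> maximizers V (n c)"
      using n(2) by (simp add: face_normal_cone_def)
    have "n c \<in> n ` face_normal_cone V (n c)"
      using n(2) face_normal_cone_self[of "n c" V] by auto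
    then have "c \<in> face_normal_cone V (n c)"
      using orthogonal_transformation_inj[OF n(1)] by (simp add: inj_image_mem_iff)
    then show "maximizers V (n c) \<subseteq> maximizers V c"
      using n(2) by (simp add: face_normal_cone_def)
  qed
  have "face_preserving V n"
    unfolding face_preserving_def
  proof
    show "inj_on n V"
      using orthogonal_transformation_inj[OF n(1)] by (simp add: inj_on_def inj_def)
    have "n (inv n c) = c" for c
      using orthogonal_transformation_surj[OF n(1)] by (simp add: surj_f_inv_f)
    then show "\<forall>c. maximizers (n ` V) c = n ` maximizers V c"
      using maximizers_n by (metis maximizers_orthogonal_image[OF n(1)])
  qed
  then have shift: "n u = u + (n v - v)" if "u \<in> V" for u
    using orthogonal_transformation_face_preserving_translation[OF V(1,2) n(1) _ that \<open>v \<in> V\<close>]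
    by (metis add.commute diff_add_cancel)
  obtain a where a: "sum a V = 1" "(\<Sum>u\<in>V. a u *\<^sub>R u) = 0"
    using V(1,3) by (auto simp: affine_hull_finite)
  have "0 = n (\<Sum>u\<in>V. a u *\<^sub>R u)"
    using a(2) linear_0[OF orthogonal_transformation_linear[OF n(1)]] by simp
  also have "\<dots> = (\<Sum>u\<in>V. a u *\<^sub>R (u + (n v - v)))"
    using shift by (simp add: linear_sum[OF orthogonal_transformation_linear[OF n(1)]]
        linear_scale[OF orthogonal_transformation_linear[OF n(1)]])
  also have "\<dots> = n v - v"
    using a by (simp add: scaleR_add_right sum.distrib flip: scaleR_left.sum)
  finally show ?thesis
    by simp
qed

lemma finite_image_if_factors:
  assumes "finite (\<sigma> ` A)" "\<And>x y. x \<in> A \<Longrightarrow> y \<in> A \<Longrightarrow> \<sigma> x = \<sigma> y \<Longrightarrow> f x = f y"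
  shows "finite (f ` A)"
proof -
  have "f x \<in> (\<lambda>s. f (inv_into A \<sigma> s)) ` \<sigma> ` A" if "x \<in> A" for x
  proof -
    have "inv_into A \<sigma> (\<sigma> x) \<in> A" "\<sigma> (inv_into A \<sigma> (\<sigma> x)) = \<sigma> x"
      using that by (simp_all add: inv_into_into f_inv_into_f)
    then have "f (inv_into A \<sigma> (\<sigma> x)) = f x"
      using assms(2) that by blast
    with that show ?thesis
      by (metis image_eqI)
  qed
  then have "f ` A \<subseteq> (\<lambda>s. f (inv_into A \<sigma> s)) ` \<sigma> ` A"
    by blast
  then show ?thesis
    using assms(1) finite_subset by blast
qed

lemma finite_range_face_normal_cone:
  assumes "finite V"
  shows "finite (range (face_normal_cone V))"
proof -
  have "range (face_normal_cone V) \<subseteq> (\<lambda>M. {c'. M \<subseteq> maximizers V c'}) ` Pow V"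
    using maximizers_subset by (auto simp: face_normal_cone_def)
  with assms show ?thesis
    by (meson finite_Pow_iff finite_imageI finite_subset)
qed

lemma finite_orbit:
  fixes V :: "'a::euclidean_space set"
  assumes V: "finite V" "V \<subseteq> sphere 0 r" "0 \<in> affine hull V"
    and G: "\<And>g. g \<in> G \<Longrightarrow> orthogonal_transformation g"
      "\<And>g. g \<in> G \<Longrightarrow> (\<lambda>C. g ` C) ` range (face_normal_cone V) = range (face_normal_cone V)"
  shows "finite ((\<lambda>g. g ` V) ` G)"
proof (rule finite_image_if_factors)
  let ?F = "range (face_normal_cone V)"
  have "finite (PiE ?F (\<lambda>_. ?F))"
    using finite_range_face_normal_cone[OF V(1)] by (simp add: finite_PiE)
  moreover have "g ` C \<in> ?F" if "g \<in> G" "C \<in> ?F" for g C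
  proof -
    have "g ` C \<in> (\<lambda>C. g ` C) ` ?F"
      using that(2) by (rule imageI)
    with G(2)[OF that(1)] show ?thesis
      by simp
  qed
  then have "(\<lambda>g. restrict (\<lambda>C. g ` C) ?F) ` G \<subseteq> PiE ?F (\<lambda>_. ?F)"
    by (auto simp: restrict_PiE_iff)
  ultimately show "finite ((\<lambda>g. restrict (\<lambda>C. g ` C) ?F) ` G)"
    by (rule finite_subset[rotated])
next
  let ?F = "range (face_normal_cone V)"
  fix g h assume gh: "g \<in> G" "h \<in> G" "restrict (\<lambda>C. g ` C) ?F = restrict (\<lambda>C. h ` C) ?F"
  have bij: "bij h"
    using G(1)[OF gh(2)] by (rule orthogonal_transformation_bij)
  have fixes_cones: "(inv h \<circ> g) ` C = C" if "C \<in> ?F" for C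
  proof -
    have "g ` C = h ` C"
      using fun_cong[OF gh(3), of C] that by simp
    then have "(inv h \<circ> g) ` C = inv h ` h ` C"
      by (metis image_comp)
    also have "\<dots> = C"
      using bij by (simp add: bij_is_inj image_inv_f_f)
    finally show ?thesis .
  qed
  have "orthogonal_transformation (inv h \<circ> g)"
    using G(1) gh(1,2) by (simp add: orthogonal_transformation_compose orthogonal_transformation_inv)
  then have "(inv h \<circ> g) v = v" if "v \<in> V" for v
    using orthogonal_transformation_fixes_vertices[OF V _ fixes_cones that] by blast
  then have "inv h (g v) = v" if "v \<in> V" for v
    using that by simp
  then have "g v = h v" if "v \<in> V" for v
    using bij that by (metis bij_inv_eq_iff)
  then show "g ` V = h ` V"
    by (rule image_cong[OF refl])
qed

lemma image_orbit_eq: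
  assumes "orthogonal_subgroup G" "g \<in> G"
  shows "(\<lambda>U. g ` U) ` ((\<lambda>h. h ` V) ` G) = (\<lambda>h. h ` V) ` G"
proof
  show "(\<lambda>U. g ` U) ` ((\<lambda>h. h ` V) ` G) \<subseteq> (\<lambda>h. h ` V) ` G"
  proof
    fix U assume "U \<in> (\<lambda>U. g ` U) ` ((\<lambda>h. h ` V) ` G)"
    then obtain h where "h \<in> G" "U = (g \<circ> h) ` V"
      by (auto simp: image_comp)
    moreover from this have "g \<circ> h \<in> G"
      using assms by (simp add: orthogonal_subgroup_def)
    ultimately show "U \<in> (\<lambda>h. h ` V) ` G"
      by blast
  qed
  show "(\<lambda>h. h ` V) ` G \<subseteq> (\<lambda>U. g ` U) ` ((\<lambda>h. h ` V) ` G)"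
  proof
    fix U assume "U \<in> (\<lambda>h. h ` V) ` G"
    then obtain h where h: "h \<in> G" "U = h ` V"
      by blast
    have "surj g"
      using assms by (simp add: orthogonal_subgroup_def orthogonal_transformation_surj)
    then have "U = g ` (inv g \<circ> h) ` V"
      using h(2) by (simp add: image_comp surj_f_inv_f)
    moreover have "inv g \<circ> h \<in> G"
      using assms h(1) by (simp add: orthogonal_subgroup_def)
    ultimately show "U \<in> (\<lambda>U. g ` U) ` ((\<lambda>h. h ` V) ` G)"
      by blast
  qed
qed

lemma orbit_sum_symmetric_realization:
  fixes V :: "'a::euclidean_space set"
  assumes G: "orthogonal_subgroup G"
    "\<And>g. g \<in> G \<Longrightarrow> (\<lambda>C. g ` C) ` range (face_normal_cone V) = range (face_normal_cone V)"
    and V: "finite V" "V \<noteq> {}" "V \<subseteq> sphere 0 \<rho>" "0 \<in> affine hull V"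
  defines "\<U> \<equiv> (\<lambda>g. g ` V) ` G"
  shows "inscribed (convex hull \<Sum>\<U>)" "normal_fan (convex hull \<Sum>\<U>) = range (face_normal_cone V)"
    "\<And>g. g \<in> G \<Longrightarrow> g ` (convex hull \<Sum>\<U>) = convex hull \<Sum>\<U>"
proof -
  have orth: "\<And>g. g \<in> G \<Longrightarrow> orthogonal_transformation g" and "id \<in> G"
    using G(1) by (auto simp: orthogonal_subgroup_def)
  have "id ` V \<in> \<U>"
    unfolding \<U>_def using \<open>id \<in> G\<close> by (rule imageI)
  then have "V \<in> \<U>"
    by simp
  have "finite \<U>"
    unfolding \<U>_def using finite_orbit[OF V(1,3,4) orth G(2)] .
  have orbit: "finite U \<and> U \<noteq> {} \<and> (\<exists>r. U \<subseteq> sphere 0 r) \<and> face_normal_cone U = face_normal_cone V"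
    if U: "U \<in> \<U>" for U
  proof -
    obtain g where g: "g \<in> G" "U = g ` V"
      using U by (auto simp: \<U>_def)
    then have "U \<subseteq> sphere 0 \<rho>"
      using V(3) orthogonal_transformation_norm[OF orth] by auto
    moreover have "face_normal_cone U = face_normal_cone V"
      unfolding g(2) by (rule face_normal_cone_orthogonal_image_eq[OF orth[OF g(1)] G(2)[OF g(1)]])
    ultimately show ?thesis
      using V(1,2) g(2) by blast
  qed
  show "inscribed (convex hull \<Sum>\<U>)" "normal_fan (convex hull \<Sum>\<U>) = range (face_normal_cone V)"
    using inscribed_convex_hull_set_sum[OF \<open>finite \<U>\<close> \<open>V \<in> \<U>\<close> orbit] by simp_all
  show "g ` (convex hull \<Sum>\<U>) = convex hull \<Sum>\<U>" if "g \<in> G" for g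
    unfolding \<U>_def using image_orbit_eq[OF G(1) that] orth[OF that]
    by (intro image_convex_hull_set_sum_eq)
      (simp_all add: orthogonal_transformation_linear orthogonal_transformation_inj)
qed

theorem corollary2p9:
  fixes G :: "('a::euclidean_space \<Rightarrow> 'a) set" and \<F> :: "'a set set"
  assumes "orthogonal_subgroup G"
    and "is_fan \<F>"
    and "\<forall>g\<in>G. \<F> = {g ` C | C. C \<in> \<F>}"
    and "inscribable \<F>"
  shows "\<exists>P. inscribed P \<and> normal_fan P = \<F> \<and> (\<forall>g\<in>G. g ` P = P)"
proof -
  obtain P where P: "inscribed P" "normal_fan P = \<F>"
    using assms(4) by (auto simp: inscribable_def)
  show ?thesis
  proof (cases "P = {}")
    case True
    with P show ?thesis
      by auto
  next
    case False
    obtain V \<rho> where V: "finite V" "V \<noteq> {}" "V \<subseteq> sphere 0 \<rho>" "0 \<in> affine hull V"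
      and "normal_fan P = range (face_normal_cone V)"
      by (rule inscribed_centered_vertices[OF P(1) False])
    with P(2) have F: "\<F> = range (face_normal_cone V)"
      by simp
    with assms(3) have "(\<lambda>C. g ` C) ` range (face_normal_cone V) = range (face_normal_cone V)"
      if "g \<in> G" for g
      using that by (simp add: Setcompr_eq_image)
    from orbit_sum_symmetric_realization[OF assms(1) this V] show ?thesis
      unfolding F by blast
  qed
qed

end
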